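(* Let $(A,S,P)$ be a $\mathbb P$-contraction on $\mathbb C^2$ which is doubly commuting (i.e. each of $A,S,P$ commutes with the adjoints of the other two), such that its Taylor joint spectrum $\sigma_T(A,S,P)$ is contained in $b\mathbb P$ and $A^*A+\frac14S^*S\le I$. Then $(A,S,P)$ is a $\mathbb P$-unitary.
   Context: The pentablock is $\mathbb P=\{(a_{21},\operatorname{tr}A_0,\det A_0): A_0=[a_{ij}]\in M_2(\mathbb C),\ \|A_0\|<1\}$; a $\mathbb P$-contraction is a commuting triple whose Taylor joint spectrum lies in $\overline{\mathbb P}$ and satisfying $\|f(A,S,P)\|\le\sup_{\overline{\mathbb P}}|f|$ for all rational $f$ with no poles in $\overline{\mathbb P}$. With $b\Gamma=\{(z_1+z_2,z_1z_2):|z_1|=|z_2|=1\}$, the distinguished boundary is $b\mathbb P=\{(a,s,p):(s,p)\in b\Gamma,\ |a|^2+\frac14|s|^2=1\}$. A $\mathbb P$-unitary is a commuting triple of normal operators with Taylor joint spectrum in $b\mathbb P$. *)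

theory Defs
  imports "HOL-Analysis.Analysis"
begin

type_synonym cvec = "complex ^ 2"
type_synonym cmat = "complex ^ 2 ^ 2"

definition adj :: "cmat \<Rightarrow> cmat" where
  "adj M = (\<chi> i j. cnj (M $ j $ i))"

definition opnorm :: "cmat \<Rightarrow> real" where
  "opnorm M = onorm (\<lambda>x. M *v x)"

definition cinner :: "cvec \<Rightarrow> cvec \<Rightarrow> complex" where
  "cinner x y = (\<Sum>i\<in>UNIV. x $ i * cnj (y $ i))"

definition op_le :: "cmat \<Rightarrow> cmat \<Rightarrow> bool" where
  "op_le M N \<longleftrightarrow> (\<forall>x. Im (cinner ((N - M) *v x) x) = 0 \<and> 0 \<le> Re (cinner ((N - M) *v x) x))"

definition mpow :: "cmat \<Rightarrow> nat \<Rightarrow> cmat" where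
  "mpow M k = (((**) M) ^^ k) (mat 1)"

definition normal_op :: "cmat \<Rightarrow> bool" where
  "normal_op M \<longleftrightarrow> M ** adj M = adj M ** M"

definition commuting_triple :: "cmat \<Rightarrow> cmat \<Rightarrow> cmat \<Rightarrow> bool" where
  "commuting_triple A S P \<longleftrightarrow> A ** S = S ** A \<and> A ** P = P ** A \<and> S ** P = P ** S"

definition doubly_commuting :: "cmat \<Rightarrow> cmat \<Rightarrow> cmat \<Rightarrow> bool" where
  "doubly_commuting A S P \<longleftrightarrow> commuting_triple A S P \<and>
     A ** adj S = adj S ** A \<and> A ** adj P = adj P ** A \<and>
     S ** adj A = adj A ** S \<and> S ** adj P = adj P ** S \<and>
     P ** adj A = adj A ** P \<and> P ** adj S = adj S ** P"

text \<open>Exactness of the Koszul complex of the commuting triple (T1,T2,T3) on H = C^2: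
  0 \<rightarrow> H \<rightarrow> H^3 \<rightarrow> H^3 \<rightarrow> H \<rightarrow> 0, with
  d1 x = (T1 x, T2 x, T3 x),
  d2 (y1,y2,y3) = (T1 y2 - T2 y1, T1 y3 - T3 y1, T2 y3 - T3 y2)  (basis e12, e13, e23),
  d3 (z12,z13,z23) = T1 z23 - T2 z13 + T3 z12.\<close>
definition koszul_exact :: "cmat \<Rightarrow> cmat \<Rightarrow> cmat \<Rightarrow> bool" where
  "koszul_exact T1 T2 T3 \<longleftrightarrow>
     (\<forall>x. T1 *v x = 0 \<and> T2 *v x = 0 \<and> T3 *v x = 0 \<longrightarrow> x = 0) \<and>
     (\<forall>y1 y2 y3. T1 *v y2 - T2 *v y1 = 0 \<and> T1 *v y3 - T3 *v y1 = 0 \<and> T2 *v y3 - T3 *v y2 = 0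
        \<longrightarrow> (\<exists>x. y1 = T1 *v x \<and> y2 = T2 *v x \<and> y3 = T3 *v x)) \<and>
     (\<forall>z12 z13 z23. T1 *v z23 - T2 *v z13 + T3 *v z12 = 0
        \<longrightarrow> (\<exists>y1 y2 y3. z12 = T1 *v y2 - T2 *v y1 \<and> z13 = T1 *v y3 - T3 *v y1 \<and>
                         z23 = T2 *v y3 - T3 *v y2)) \<and>
     (\<forall>w. \<exists>z12 z13 z23. w = T1 *v z23 - T2 *v z13 + T3 *v z12)"

definition taylor_spectrum :: "cmat \<Rightarrow> cmat \<Rightarrow> cmat \<Rightarrow> (complex \<times> complex \<times> complex) set" where
  "taylor_spectrum A S P =
     {(a, s, p). \<not> koszul_exact (A - mat a) (S - mat s) (P - mat p)}"

definition pentablock :: "(complex \<times> complex \<times> complex) set" where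
  "pentablock = {(M $ 2 $ 1, M $ 1 $ 1 + M $ 2 $ 2, det M) | M :: cmat. opnorm M < 1}"

definition bGamma :: "(complex \<times> complex) set" where
  "bGamma = {(z1 + z2, z1 * z2) | z1 z2. cmod z1 = 1 \<and> cmod z2 = 1}"

definition bPenta :: "(complex \<times> complex \<times> complex) set" where
  "bPenta = {(a, s, p). (s, p) \<in> bGamma \<and> (cmod a)\<^sup>2 + (cmod s)\<^sup>2 / 4 = 1}"

definition is_poly3 :: "(nat \<times> nat \<times> nat \<Rightarrow> complex) \<Rightarrow> bool" where
  "is_poly3 c \<longleftrightarrow> finite {k. c k \<noteq> 0}"

definition poly3_eval :: "(nat \<times> nat \<times> nat \<Rightarrow> complex) \<Rightarrow> complex \<times> complex \<times> complex \<Rightarrow> complex" where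
  "poly3_eval c z = (\<Sum>(i, j, l)\<in>{k. c k \<noteq> 0}. c (i, j, l) * fst z ^ i * fst (snd z) ^ j * snd (snd z) ^ l)"

definition poly3_mat :: "(nat \<times> nat \<times> nat \<Rightarrow> complex) \<Rightarrow> cmat \<Rightarrow> cmat \<Rightarrow> cmat \<Rightarrow> cmat" where
  "poly3_mat c A S P = (\<Sum>(i, j, l)\<in>{k. c k \<noteq> 0}. mat (c (i, j, l)) ** (mpow A i ** mpow S j ** mpow P l))"

text \<open>P-contraction: commuting triple, Taylor spectrum in the closed pentablock, and
  \<open>closure pentablock\<close> is a spectral set: for every rational function f = p/q with q
  nonvanishing on the closed pentablock, \<parallel>f(A,S,P)\<parallel> \<le> sup of |f| over the closed pentablock.\<close>
definition penta_contraction :: "cmat \<Rightarrow> cmat \<Rightarrow> cmat \<Rightarrow> bool" where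
  "penta_contraction A S P \<longleftrightarrow> commuting_triple A S P \<and>
     taylor_spectrum A S P \<subseteq> closure pentablock \<and>
     (\<forall>p q. is_poly3 p \<and> is_poly3 q \<and> (\<forall>z\<in>closure pentablock. poly3_eval q z \<noteq> 0) \<longrightarrow>
        opnorm (poly3_mat p A S P ** matrix_inv (poly3_mat q A S P))
          \<le> (SUP z\<in>closure pentablock. cmod (poly3_eval p z / poly3_eval q z)))"

definition penta_unitary :: "cmat \<Rightarrow> cmat \<Rightarrow> cmat \<Rightarrow> bool" where
  "penta_unitary A S P \<longleftrightarrow> commuting_triple A S P \<and>
     normal_op A \<and> normal_op S \<and> normal_op P \<and> taylor_spectrum A S P \<subseteq> bPenta"

end

theory Submission
  imports Defs
begin

text \<open>
  On \<open>\<complex>\<^sup>2\<close> the commuting triple has a joint eigenvector \<open>v\<close>, whose joint eigenvalue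
  \<open>(a, s, p)\<close> lies in the Taylor spectrum and hence in \<open>b\<P>\<close>; so \<open>|a|\<^sup>2 + |s|\<^sup>2/4 = 1\<close> and
  \<open>|p| = 1\<close>. For \<open>T \<in> {A, S, P}\<close> with eigenvalue \<open>\<lambda>\<close> and \<open>w = T\<^sup>* v\<close> one gets
  \<open>\<parallel>T w\<parallel> \<le> |\<lambda>| \<parallel>w\<parallel>\<close>: for \<open>A\<close> because double commutativity gives \<open>S w = s w\<close>, so that
  \<open>A\<^sup>*A + S\<^sup>*S/4 \<le> I\<close> leaves at most \<open>|a|\<^sup>2 \<parallel>w\<parallel>\<^sup>2\<close> for \<open>\<parallel>A w\<parallel>\<^sup>2\<close> (symmetrically for \<open>S\<close>);
  for \<open>P\<close> because the spectral set inequality for the coordinate polynomial \<open>p\<close>, which is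
  bounded by \<open>1\<close> on the closed pentablock, gives \<open>\<parallel>P\<parallel> \<le> 1\<close>. Cauchy--Schwarz applied to
  \<open>\<parallel>w\<parallel>\<^sup>2 = \<langle>T w, v\<rangle>\<close> then forces \<open>T\<^sup>* v = \<lambda>\<^sup>* v\<close>. Finally, if \<open>v\<close> is an eigenvector of
  both \<open>T\<close> and \<open>T\<^sup>*\<close>, so is \<open>v\<^sup>\<bottom>\<close>, and \<open>T T\<^sup>* - T\<^sup>* T\<close> vanishes on the basis \<open>v, v\<^sup>\<bottom>\<close>.
\<close>

lemma matrix_vector_mult_2:
  fixes M :: cmat
  shows "(M *v x) $ 1 = M$1$1 * x$1 + M$1$2 * x$2"
    and "(M *v x) $ 2 = M$2$1 * x$1 + M$2$2 * x$2"
  by (simp_all add: matrix_vector_mult_def sum_2)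

lemma vec_eq_2: "(x::cvec) = y \<longleftrightarrow> x$1 = y$1 \<and> x$2 = y$2"
  by (simp add: vec_eq_iff forall_2)

lemma adj_nth [simp]: "adj M $ i $ j = cnj (M $ j $ i)"
  by (simp add: adj_def)

lemma adj_adj [simp]: "adj (adj M) = M"
  by (simp add: adj_def vec_eq_iff)

lemma mat_mult_vector: "mat c *v x = c *s (x :: 'a::semiring_1 ^ 'n)"
  by (simp add: vec_eq_iff matrix_vector_mult_def mat_def if_distrib[of "\<lambda>a. a * _"] sum.delta cong: if_cong)

lemma cinner_2: "cinner x y = x$1 * cnj (y$1) + x$2 * cnj (y$2)"
  by (simp add: cinner_def sum_2)

lemma cinner_adj_left: "cinner (M *v x) y = cinner x (adj M *v y)"
  by (simp add: cinner_2 matrix_vector_mult_2 algebra_simps)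

lemma cinner_adj_right: "cinner x (M *v y) = cinner (adj M *v x) y"
  by (simp add: cinner_2 matrix_vector_mult_2 algebra_simps)

lemma cinner_scale_left: "cinner (c *s x) y = c * cinner x y"
  by (simp add: cinner_def sum_distrib_left algebra_simps)

lemma cinner_scale_right: "cinner x (c *s y) = cnj c * cinner x y"
  by (simp add: cinner_def sum_distrib_left algebra_simps)

lemma cinner_add_left: "cinner (x + y) z = cinner x z + cinner y z"
  by (simp add: cinner_def sum.distrib algebra_simps)

lemma cinner_diff_left: "cinner (x - y) z = cinner x z - cinner y z"
  by (simp add: cinner_def sum_subtractf algebra_simps)

lemma Re_cinner: "Re (cinner x y) = inner x y"
  by (simp add: cinner_def inner_vec_def inner_complex_def)

lemma cinner_self: "cinner x x = of_real ((norm x)\<^sup>2)"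
  by (simp add: cinner_def norm_vec_def L2_set_def sum_nonneg
      flip: complex_norm_square of_real_power of_real_sum)

lemma cinner_Cauchy_Schwarz: "cmod (cinner x y) \<le> norm x * norm y"
proof -
  have "cmod (cinner x y) \<le> (\<Sum>i\<in>UNIV. \<bar>cmod (x$i)\<bar> * \<bar>cmod (y$i)\<bar>)"
    unfolding cinner_def by (rule order_trans[OF norm_sum]) (simp add: norm_mult)
  also have "\<dots> \<le> norm x * norm y"
    unfolding norm_vec_def by (rule L2_set_mult_ineq)
  finally show ?thesis .
qed

lemma norm_vector_scale: "norm (c *s x) = cmod c * norm (x :: complex ^ 'n)"
  by (simp add: norm_vec_def norm_mult L2_set_right_distrib)

lemma adj_eigenvector_of_norm_le:
  fixes T :: cmat
  assumes ev: "T *v v = l *s v"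
    and bound: "norm (T *v (adj T *v v)) \<le> cmod l * norm (adj T *v v)"
  shows "adj T *v v = cnj l *s v"
proof -
  define w where "w = adj T *v v"
  have "of_real ((norm w)\<^sup>2) = cinner (T *v w) v"
    by (simp add: cinner_adj_left cinner_self w_def)
  then have "(norm w)\<^sup>2 \<le> norm (T *v w) * norm v"
    by (metis cinner_Cauchy_Schwarz norm_of_real abs_power2)
  also have "\<dots> \<le> cmod l * norm w * norm v"
    using bound by (simp add: w_def mult_right_mono)
  finally have w_le: "norm w \<le> cmod l * norm v"
    by (cases "norm w = 0") (auto simp: power2_eq_square mult.assoc)
  have "cinner w v = cnj l * of_real ((norm v)\<^sup>2)"
    by (simp add: w_def flip: cinner_adj_right) (simp add: ev cinner_scale_right cinner_self)
  then have "inner w (cnj l *s v) = Re (l * cnj l * of_real ((norm v)\<^sup>2))"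
    by (simp add: Re_cinner[symmetric] cinner_scale_right mult.assoc)
  also have "\<dots> = (cmod l * norm v)\<^sup>2"
    by (simp only: flip: complex_norm_square of_real_mult power_mult_distrib) simp
  finally have "inner w (cnj l *s v) = (cmod l * norm v)\<^sup>2" .
  then have "(norm (w - cnj l *s v))\<^sup>2 = (norm w)\<^sup>2 - (cmod l * norm v)\<^sup>2"
    using dot_norm_neg[of w "cnj l *s v"] by (simp add: norm_vector_scale)
  also have "\<dots> \<le> 0"
    using w_le by (simp add: abs_le_square_iff)
  finally show ?thesis by (simp add: w_def)
qed

definition perp :: "cvec \<Rightarrow> cvec" where
  "perp v = (\<chi> i. if i = 1 then - cnj (v$2) else cnj (v$1))"

lemma perp_nth [simp]: "perp v $ 1 = - cnj (v$2)" "perp v $ 2 = cnj (v$1)"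
  by (simp_all add: perp_def)

lemma cinner_perp: "cinner (perp v) v = 0"
  by (simp add: cinner_2 algebra_simps)

lemma perp_eq_0_iff: "perp v = 0 \<longleftrightarrow> v = 0"
  by (auto simp: vec_eq_2)

lemma orthogonal_imp_multiple_perp:
  assumes "cinner z v = 0" "v \<noteq> 0"
  shows "\<exists>c. z = c *s perp v"
proof (cases "v$1 = 0")
  case False
  have "z$1 * cnj (v$1) = - (z$2 * cnj (v$2))"
    using assms(1) by (simp add: cinner_2 eq_neg_iff_add_eq_0)
  then have "z = (z$2 / cnj (v$1)) *s perp v"
    using False by (simp add: vec_eq_2 field_simps)
  then show ?thesis by blast
next
  case True
  then have "v$2 \<noteq> 0" using assms(2) by (auto simp: vec_eq_2)
  moreover have "z$2 * cnj (v$2) = 0"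
    using assms(1) True by (simp add: cinner_2)
  ultimately have "z = (- z$1 / cnj (v$2)) *s perp v"
    using True by (simp add: vec_eq_2 field_simps)
  then show ?thesis by blast
qed

lemma kernel_collinear_2:
  fixes B :: cmat
  assumes "B \<noteq> 0" "B *v v = 0" "B *v u = 0" "v \<noteq> 0"
  shows "\<exists>c. u = c *s v"
proof -
  \<comment> \<open>\<open>D = det [u v]\<close>, and each entry of \<open>B\<close> times \<open>D\<close> is a combination of \<open>B u\<close> and \<open>B v\<close>\<close>
  define D where "D = u$1 * v$2 - u$2 * v$1"
  have row_v: "B$i$1 * v$1 + B$i$2 * v$2 = 0" for i
    using assms(2) by (simp add: vec_eq_iff matrix_vector_mult_def sum_2)
  have row_u: "B$i$1 * u$1 + B$i$2 * u$2 = 0" for i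
    using assms(3) by (simp add: vec_eq_iff matrix_vector_mult_def sum_2)
  have "B$i$1 * D = v$2 * (B$i$1 * u$1 + B$i$2 * u$2) - u$2 * (B$i$1 * v$1 + B$i$2 * v$2)"
    and "B$i$2 * D = u$1 * (B$i$1 * v$1 + B$i$2 * v$2) - v$1 * (B$i$1 * u$1 + B$i$2 * u$2)" for i
    by (simp_all add: D_def algebra_simps)
  then have "B$i$j * D = 0" for i j
    using row_u row_v exhaust_2[of j] by auto
  moreover obtain i j where "B$i$j \<noteq> 0"
    using assms(1) by (auto simp: vec_eq_iff)
  ultimately have D0: "D = 0" by (metis mult_eq_0_iff)
  show ?thesis
  proof (cases "v$1 = 0")
    case False
    then have "u = (u$1 / v$1) *s v" using D0 by (simp add: vec_eq_2 D_def field_simps)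
    then show ?thesis by blast
  next
    case True
    then have "v$2 \<noteq> 0" using assms(4) by (auto simp: vec_eq_2)
    then have "u = (u$2 / v$2) *s v" using D0 True by (simp add: vec_eq_2 D_def field_simps)
    then show ?thesis by blast
  qed
qed

lemma matrix_eq_0_if_kills_perp:
  fixes M :: cmat
  assumes "v \<noteq> 0" "M *v v = 0" "M *v perp v = 0"
  shows "M = 0"
proof (rule ccontr)
  \<comment> \<open>otherwise \<open>perp v\<close> would be a multiple of \<open>v\<close>, yet it is a nonzero vector orthogonal to \<open>v\<close>\<close>
  assume "M \<noteq> 0"
  then obtain c where c: "perp v = c *s v"
    using kernel_collinear_2 assms by blast
  have "0 = c * of_real ((norm v)\<^sup>2)"
    using cinner_perp[of v] by (simp add: c cinner_scale_left cinner_self)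
  then have "perp v = 0" using assms(1) c by simp
  then show False using assms(1) by (simp add: perp_eq_0_iff)
qed

lemma normal_op_of_joint_eigenvector:
  fixes T :: cmat
  assumes "v \<noteq> 0" "T *v v = l *s v" "adj T *v v = m *s v"
  shows "normal_op T"
proof -
  have "cinner (T *v perp v) v = 0" "cinner (adj T *v perp v) v = 0"
    using assms by (simp_all add: cinner_adj_left cinner_adj_right[symmetric]
        cinner_scale_right cinner_perp)
  then obtain \<mu> \<nu> where "T *v perp v = \<mu> *s perp v" "adj T *v perp v = \<nu> *s perp v"
    using orthogonal_imp_multiple_perp assms(1) by metis
  then have "(T ** adj T - adj T ** T) *v v = 0" "(T ** adj T - adj T ** T) *v perp v = 0"
    using assms by (simp_all add: matrix_vector_mult_diff_rdistrib vector_scalar_commute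
        flip: matrix_vector_mul_assoc)
  then have "T ** adj T - adj T ** T = 0"
    by (rule matrix_eq_0_if_kills_perp[OF assms(1)])
  then show ?thesis by (simp add: normal_op_def)
qed

lemma kernel_nonzero_if_det_eq_0:
  fixes M :: "'a::field ^ 'n ^ 'n"
  assumes "det M = 0"
  shows "\<exists>x. x \<noteq> 0 \<and> M *v x = 0"
proof -
  have "\<not> invertible M" using assms by (simp add: invertible_det_nz)
  then show ?thesis by (auto simp: invertible_left_inverse matrix_left_invertible_ker)
qed

lemma eigenvector_exists_2: "\<exists>v l. v \<noteq> 0 \<and> M *v v = l *s v" for M :: cmat
proof -
  define t where "t = M$1$1 + M$2$2"
  define r where "r = csqrt (t\<^sup>2 - 4 * det M)"
  define l where "l = (t + r) / 2"
  have "det (M - mat l) = l\<^sup>2 - t * l + det M"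
    by (simp add: det_2 t_def mat_def power2_eq_square algebra_simps)
  also have "\<dots> = (r\<^sup>2 - (t\<^sup>2 - 4 * det M)) / 4"
    by (simp add: l_def power2_eq_square field_simps)
  also have "\<dots> = 0"
    by (simp add: r_def)
  finally obtain v where "v \<noteq> 0" "(M - mat l) *v v = 0"
    using kernel_nonzero_if_det_eq_0 by blast
  then show ?thesis
    by (auto simp: matrix_vector_mult_diff_rdistrib mat_mult_vector)
qed

lemma eigenvector_of_commuting:
  fixes M N :: cmat
  assumes "M *v v = l *s v" "v \<noteq> 0" "M \<noteq> mat l" "M ** N = N ** M"
  shows "\<exists>\<mu>. N *v v = \<mu> *s v"
proof -
  have "M *v (N *v v) = N *v (M *v v)"
    by (metis assms(4) matrix_vector_mul_assoc)
  then have "(M - mat l) *v v = 0" "(M - mat l) *v (N *v v) = 0"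
    using assms(1) by (simp_all add: matrix_vector_mult_diff_rdistrib mat_mult_vector
        vector_scalar_commute)
  moreover have "M - mat l \<noteq> 0" using assms(3) by simp
  ultimately show ?thesis
    using kernel_collinear_2 assms(2) by blast
qed

lemma commuting_triple_common_eigenvector:
  fixes A S P :: cmat
  assumes "commuting_triple A S P"
  shows "\<exists>v a s p. v \<noteq> 0 \<and> A *v v = a *s v \<and> S *v v = s *s v \<and> P *v v = p *s v"
proof -
  have AS: "A ** S = S ** A" and AP: "A ** P = P ** A" and SP: "S ** P = P ** S"
    using assms by (auto simp: commuting_triple_def)
  obtain v a where v: "v \<noteq> 0" "A *v v = a *s v" using eigenvector_exists_2 by blast
  show ?thesis
  proof (cases "A = mat a")
    case False
    then show ?thesis
      using eigenvector_of_commuting[OF v(2,1) False] AS AP v by blast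
  next
    case A: True
    obtain w s where w: "w \<noteq> 0" "S *v w = s *s w" using eigenvector_exists_2 by blast
    show ?thesis
    proof (cases "S = mat s")
      case False
      then show ?thesis
        using eigenvector_of_commuting[OF w(2,1) False SP] A w by (auto simp: mat_mult_vector)
    next
      case S: True
      obtain u p where "u \<noteq> 0" "P *v u = p *s u" using eigenvector_exists_2 by blast
      then show ?thesis using A S by (auto simp: mat_mult_vector)
    qed
  qed
qed

lemma joint_eigenvalue_in_taylor_spectrum:
  assumes "v \<noteq> 0" "A *v v = a *s v" "S *v v = s *s v" "P *v v = p *s v"
  shows "(a, s, p) \<in> taylor_spectrum A S P"
  using assms by (auto simp: taylor_spectrum_def koszul_exact_def matrix_vector_mult_diff_rdistrib
      mat_mult_vector)

lemma op_le_Re_cinner: "op_le M N \<Longrightarrow> Re (cinner (M *v x) x) \<le> Re (cinner (N *v x) x)"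
  by (simp add: op_le_def matrix_vector_mult_diff_rdistrib cinner_diff_left)

lemma cinner_adj_mult_self: "cinner ((adj A ** A) *v x) x = of_real ((norm (A *v x))\<^sup>2)"
  by (simp add: cinner_adj_left cinner_self flip: matrix_vector_mul_assoc)

lemma cinner_weighted_gram:
  "cinner ((mat (of_real \<alpha>) ** (adj A ** A) + mat (of_real \<beta>) ** (adj S ** S)) *v x) x
    = of_real (\<alpha> * (norm (A *v x))\<^sup>2 + \<beta> * (norm (S *v x))\<^sup>2)"
  by (simp add: matrix_vector_mult_add_rdistrib cinner_add_left cinner_scale_left mat_mult_vector
      cinner_adj_mult_self flip: matrix_vector_mul_assoc[of "mat _"])

lemma adj_eigenvector_of_weighted_contraction:
  fixes A S :: cmat and \<alpha> \<beta> :: real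
  assumes contr: "op_le (mat (of_real \<alpha>) ** (adj A ** A) + mat (of_real \<beta>) ** (adj S ** S)) (mat 1)"
    and "0 < \<alpha>" and comm: "S ** adj A = adj A ** S"
    and ev: "A *v v = a *s v" "S *v v = s *s v"
    and weights: "\<alpha> * (cmod a)\<^sup>2 + \<beta> * (cmod s)\<^sup>2 = 1"
  shows "adj A *v v = cnj a *s v"
proof -
  define w where "w = adj A *v v"
  have "S *v w = s *s w"
    unfolding w_def by (metis comm ev(2) matrix_vector_mul_assoc vector_scalar_commute)
  then have "\<alpha> * (norm (A *v w))\<^sup>2 + \<beta> * (cmod s * norm w)\<^sup>2 \<le> (norm w)\<^sup>2"
    using op_le_Re_cinner[OF contr, of w]
    by (simp add: cinner_weighted_gram cinner_self norm_vector_scale)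
  moreover have "\<alpha> * (cmod a * norm w)\<^sup>2 = (norm w)\<^sup>2 - \<beta> * (cmod s * norm w)\<^sup>2"
  proof -
    have "\<alpha> * (cmod a * norm w)\<^sup>2 = (\<alpha> * (cmod a)\<^sup>2) * (norm w)\<^sup>2"
      by (simp add: power_mult_distrib)
    also have "\<dots> = (1 - \<beta> * (cmod s)\<^sup>2) * (norm w)\<^sup>2"
      using weights by (simp add: eq_diff_eq)
    also have "\<dots> = (norm w)\<^sup>2 - \<beta> * (cmod s * norm w)\<^sup>2"
      by (simp add: power_mult_distrib algebra_simps)
    finally show ?thesis .
  qed
  ultimately have "\<alpha> * (norm (A *v w))\<^sup>2 \<le> \<alpha> * (cmod a * norm w)\<^sup>2"
    by linarith
  then have "(norm (A *v w))\<^sup>2 \<le> (cmod a * norm w)\<^sup>2"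
    using \<open>0 < \<alpha>\<close> by simp
  then have "norm (A *v w) \<le> cmod a * norm w"
    by (rule power2_le_imp_le) simp
  then show ?thesis
    using adj_eigenvector_of_norm_le[OF ev(1)] by (simp add: w_def)
qed

lemma adj_eigenvectors_of_row_contraction:
  fixes A S :: cmat
  assumes contr: "op_le (adj A ** A + mat (1/4) ** (adj S ** S)) (mat 1)"
    and "S ** adj A = adj A ** S" "A ** adj S = adj S ** A"
    and ev: "A *v v = a *s v" "S *v v = s *s v"
    and weights: "(cmod a)\<^sup>2 + (cmod s)\<^sup>2 / 4 = 1"
  shows "adj A *v v = cnj a *s v" "adj S *v v = cnj s *s v"
proof -
  have contr_A: "op_le (mat (of_real 1) ** (adj A ** A) + mat (of_real (1/4)) ** (adj S ** S)) (mat 1)"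
    and contr_S: "op_le (mat (of_real (1/4)) ** (adj S ** S) + mat (of_real 1) ** (adj A ** A)) (mat 1)"
    using contr by (simp_all add: add.commute)
  show "adj A *v v = cnj a *s v"
    by (rule adj_eigenvector_of_weighted_contraction[OF contr_A _ assms(2) ev])
      (use weights in simp_all)
  show "adj S *v v = cnj s *s v"
    by (rule adj_eigenvector_of_weighted_contraction[OF contr_S _ assms(3) ev(2,1)])
      (use weights in linarith)+
qed

lemma norm_matrix_vector_le_opnorm: "norm (M *v x) \<le> opnorm M * norm x"
  unfolding opnorm_def by (rule onorm) simp

lemma norm_square_2: "(norm x)\<^sup>2 = (cmod (x$1))\<^sup>2 + (cmod (x$2))\<^sup>2" for x :: cvec
  by (simp add: norm_vec_def L2_set_def sum_2)

lemma cmod_det_le_1_if_opnorm_le_1: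
  fixes M :: cmat
  assumes "opnorm M \<le> 1"
  shows "cmod (det M) \<le> 1"
proof -
  have column_le: "(cmod (M$1$j))\<^sup>2 + (cmod (M$2$j))\<^sup>2 \<le> 1" for j
  proof -
    define e :: cvec where "e = axis j 1"
    have "(norm e)\<^sup>2 = 1" "(norm (M *v e))\<^sup>2 = (cmod (M$1$j))\<^sup>2 + (cmod (M$2$j))\<^sup>2"
      using exhaust_2[of j] by (auto simp: e_def norm_square_2 matrix_vector_mult_2 axis_def)
    moreover have "norm (M *v e) \<le> norm e"
      using norm_matrix_vector_le_opnorm[of M e] assms mult_right_mono[OF assms, of "norm e"]
      by simp
    ultimately show ?thesis
      by (metis norm_ge_zero power_mono)
  qed
  have "cmod (det M) \<le> cmod (M$1$1) * cmod (M$2$2) + cmod (M$2$1) * cmod (M$1$2)"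
    unfolding det_2 using norm_triangle_ineq4[of "M$1$1 * M$2$2" "M$1$2 * M$2$1"]
    by (simp add: norm_mult mult.commute)
  also have "\<dots> \<le> ((cmod (M$1$1))\<^sup>2 + (cmod (M$2$2))\<^sup>2) / 2 + ((cmod (M$2$1))\<^sup>2 + (cmod (M$1$2))\<^sup>2) / 2"
    using sum_squares_bound[of "cmod (M$1$1)" "cmod (M$2$2)"]
      sum_squares_bound[of "cmod (M$2$1)" "cmod (M$1$2)"]
    by argo
  also have "\<dots> \<le> 1"
    using column_le[of 1] column_le[of 2] by argo
  finally show ?thesis .
qed

lemma closure_pentablock_cmod_le_1: "z \<in> closure pentablock \<Longrightarrow> cmod (snd (snd z)) \<le> 1"
proof -
  assume z: "z \<in> closure pentablock"
  have "pentablock \<subseteq> {z. cmod (snd (snd z)) \<le> 1}"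
    using cmod_det_le_1_if_opnorm_le_1 by (auto simp: pentablock_def)
  moreover have "closed {z :: complex \<times> complex \<times> complex. cmod (snd (snd z)) \<le> 1}"
    by (intro closed_Collect_le continuous_intros)
  ultimately have "closure pentablock \<subseteq> {z. cmod (snd (snd z)) \<le> 1}"
    by (rule closure_minimal)
  then show ?thesis using z by auto
qed

lemma closure_pentablock_nonempty: "closure pentablock \<noteq> {}"
proof -
  have "opnorm 0 = 0" by (simp add: opnorm_def onorm_zero)
  then have "(0, 0, 0) \<in> pentablock"
    unfolding pentablock_def by (auto intro!: exI[of _ "0 :: cmat"] simp: det_2)
  then show ?thesis using closure_subset by blast
qed

lemma matrix_inv_mat_1: "matrix_inv (mat 1 :: 'a::semiring_1 ^ 'n ^ 'n) = mat 1"
proof -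
  have "\<exists>B :: 'a ^ 'n ^ 'n. mat 1 ** B = mat 1 \<and> B ** mat 1 = mat 1" by auto
  then have "mat 1 ** matrix_inv (mat 1 :: 'a ^ 'n ^ 'n) = mat 1"
    unfolding matrix_inv_def by (rule someI_ex[THEN conjunct1])
  then show ?thesis by simp
qed

lemma penta_contraction_polynomial_bound:
  assumes "penta_contraction A S P" "is_poly3 c"
  shows "opnorm (poly3_mat c A S P) \<le> (SUP z\<in>closure pentablock. cmod (poly3_eval c z))"
proof -
  define one where "one = (\<lambda>k :: nat \<times> nat \<times> nat. if k = (0, 0, 0) then (1 :: complex) else 0)"
  have support: "{k. one k \<noteq> 0} = {(0, 0, 0)}" by (auto simp: one_def)
  have "is_poly3 one" by (simp add: is_poly3_def support)
  have eval_one: "poly3_eval one z = 1" for z by (simp add: poly3_eval_def support one_def)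
  have "poly3_mat one A S P = mat 1" by (simp add: poly3_mat_def support one_def mpow_def)
  moreover have "opnorm (poly3_mat c A S P ** matrix_inv (poly3_mat one A S P))
      \<le> (SUP z\<in>closure pentablock. cmod (poly3_eval c z / poly3_eval one z))"
  proof -
    have "\<forall>p q. is_poly3 p \<and> is_poly3 q \<and> (\<forall>z\<in>closure pentablock. poly3_eval q z \<noteq> 0) \<longrightarrow>
        opnorm (poly3_mat p A S P ** matrix_inv (poly3_mat q A S P))
          \<le> (SUP z\<in>closure pentablock. cmod (poly3_eval p z / poly3_eval q z))"
      using assms(1) by (simp add: penta_contraction_def)
    moreover have "\<forall>z\<in>closure pentablock. poly3_eval one z \<noteq> 0" by (simp add: eval_one)
    ultimately show ?thesis using assms(2) \<open>is_poly3 one\<close> by blast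
  qed
  ultimately show ?thesis by (simp add: eval_one matrix_inv_mat_1)
qed

lemma penta_contraction_opnorm_le_1:
  assumes "penta_contraction A S P"
  shows "opnorm P \<le> 1"
proof -
  define c where "c = (\<lambda>k :: nat \<times> nat \<times> nat. if k = (0, 0, 1) then (1 :: complex) else 0)"
  have support: "{k. c k \<noteq> 0} = {(0, 0, 1)}" by (auto simp: c_def)
  have "opnorm (poly3_mat c A S P) \<le> (SUP z\<in>closure pentablock. cmod (poly3_eval c z))"
    using assms by (rule penta_contraction_polynomial_bound) (simp add: is_poly3_def support)
  also have "\<dots> \<le> 1"
    by (rule cSUP_least[OF closure_pentablock_nonempty])
      (simp add: poly3_eval_def support c_def closure_pentablock_cmod_le_1)
  finally show ?thesis by (simp add: poly3_mat_def support) (simp add: c_def mpow_def)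
qed

lemma adj_eigenvector_of_contraction:
  fixes T :: cmat
  assumes "opnorm T \<le> 1" "T *v v = l *s v" "cmod l = 1"
  shows "adj T *v v = cnj l *s v"
proof (rule adj_eigenvector_of_norm_le[OF assms(2)])
  have "norm (T *v (adj T *v v)) \<le> opnorm T * norm (adj T *v v)"
    by (rule norm_matrix_vector_le_opnorm)
  also have "\<dots> \<le> norm (adj T *v v)"
    using mult_right_mono[OF assms(1) norm_ge_zero] by simp
  finally show "norm (T *v (adj T *v v)) \<le> cmod l * norm (adj T *v v)"
    using assms(3) by simp
qed

lemma bPenta_norms:
  assumes "(a, s, p) \<in> bPenta"
  shows "(cmod a)\<^sup>2 + (cmod s)\<^sup>2 / 4 = 1" "cmod p = 1"
  using assms by (auto simp: bPenta_def bGamma_def norm_mult)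

theorem mainTheorem18:
  fixes A S P :: cmat
  assumes "penta_contraction A S P"
    and "doubly_commuting A S P"
    and "taylor_spectrum A S P \<subseteq> bPenta"
    and "op_le (adj A ** A + mat (1/4) ** (adj S ** S)) (mat 1)"
  shows "penta_unitary A S P"
proof -
  have comm: "commuting_triple A S P" using assms(1) by (simp add: penta_contraction_def)
  obtain v a s p where v: "v \<noteq> 0" and ev: "A *v v = a *s v" "S *v v = s *s v" "P *v v = p *s v"
    using commuting_triple_common_eigenvector[OF comm] by blast
  have "(a, s, p) \<in> bPenta"
    using joint_eigenvalue_in_taylor_spectrum[OF v ev] assms(3) by blast
  note norms = bPenta_norms[OF this]
  have "S ** adj A = adj A ** S" "A ** adj S = adj S ** A"
    using assms(2) by (simp_all add: doubly_commuting_def)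
  then have "adj A *v v = cnj a *s v" "adj S *v v = cnj s *s v"
    using adj_eigenvectors_of_row_contraction[OF assms(4)] ev(1,2) norms(1) by simp_all
  moreover have "adj P *v v = cnj p *s v"
    using penta_contraction_opnorm_le_1[OF assms(1)] ev(3) norms(2)
    by (rule adj_eigenvector_of_contraction)
  ultimately show ?thesis
    using comm assms(3) v ev normal_op_of_joint_eigenvector by (auto simp: penta_unitary_def)
qed

end
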